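(* Let $I\subset[0,1]$ be a set satisfying the DCC and let $J_0\subset[0,1]$ be a finite set. Then the set $I_0=\{c\in I\mid \frac{m-1+f+kc}{m}\in J_0\text{ for some }k,m\in\mathbb{N}\text{ and }f\in D(I)\}$ is finite.
   Context: $\mathbb{N}$ denotes positive integers. $I_+=\{0\}\cup\{j\in[0,1]\mid j=\sum_{p=1}^l i_p,\ i_p\in I\}$ and $D(I)=\{a\le1\mid a=\frac{m-1+f}{m},\ m\in\mathbb{N},\ f\in I_+\}$. DCC: no infinite strictly decreasing sequence. *)

theory Defs
  imports Complex_Main
begin

definition dcc :: "real set \<Rightarrow> bool" where
  "dcc I \<longleftrightarrow> \<not> (\<exists>s :: nat \<Rightarrow> real. (\<forall>n. s n \<in> I) \<and> (\<forall>n. s (Suc n) < s n))"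

definition plus_set :: "real set \<Rightarrow> real set" where
  "plus_set I = {0} \<union> {j. 0 \<le> j \<and> j \<le> 1 \<and>
      (\<exists>xs. xs \<noteq> [] \<and> set xs \<subseteq> I \<and> j = sum_list xs)}"

definition D_set :: "real set \<Rightarrow> real set" where
  "D_set I = {a. a \<le> 1 \<and> (\<exists>(m::nat) f. m \<ge> 1 \<and> f \<in> plus_set I \<and>
      a = (real m - 1 + f) / real m)}"

end

theory Submission
  imports Defs "HOL-Library.Product_Order" "HOL-Library.Infinite_Set"
begin

text \<open>
  For a linearly ordered set, the DCC says exactly that every sequence in it has a
  non-decreasing subsequence. In this form the property passes to subsets, finite unions,
  products (componentwise order), monotone images and hence to finite sumsets. Since a DCC set
  I \<subseteq> [0,1] has a least positive element e, every element of I_+ is a sum of at most 1/e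
  elements of I, so I_+ and then D(I) satisfy the DCC.

  If infinitely many c \<in> I gave the same value j \<in> J0 of (m - 1 + f + k c)/m, we could pass to a
  subsequence along which c strictly increases while f \<in> D(I) and k, m are non-decreasing.
  As (m - 1 + x)/m is strictly increasing in x and, for x \<le> 1, non-decreasing in m,
  the value would strictly increase along the subsequence, contradicting that it is constantly j.
\<close>

definition wqo_set :: "'a::order set \<Rightarrow> bool" where
  "wqo_set A \<longleftrightarrow> (\<forall>s :: nat \<Rightarrow> 'a. range s \<subseteq> A \<longrightarrow> (\<exists>r. strict_mono r \<and> incseq (s \<circ> r)))"

lemma wqo_setD:
  fixes s :: "nat \<Rightarrow> 'a::order"
  assumes "wqo_set A" "\<And>n. s n \<in> A"
  obtains r :: "nat \<Rightarrow> nat" where "strict_mono r" "incseq (s \<circ> r)"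
  using assms unfolding wqo_set_def by blast

lemma wqo_set_subset: "wqo_set B \<Longrightarrow> A \<subseteq> B \<Longrightarrow> wqo_set A"
  unfolding wqo_set_def by blast

lemma strict_mono_enumerate_Collect:
  assumes "infinite {n. P n}"
  obtains r :: "nat \<Rightarrow> nat" where "strict_mono r" "\<And>n. P (r n)"
  using strict_mono_enumerate[OF assms] enumerate_in_set[OF assms] by blast

lemma wqo_set_finite: "finite A \<Longrightarrow> wqo_set A"
  unfolding wqo_set_def
proof (intro allI impI)
  fix s :: "nat \<Rightarrow> 'a" assume "finite A" "range s \<subseteq> A"
  then have "finite (range s)" by (rule finite_subset[rotated])
  then obtain a where "infinite (s -` {a})"
    by (rule inf_img_fin_domE) simp
  then have "infinite {n. s n = a}" by (simp add: vimage_def)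
  then obtain r :: "nat \<Rightarrow> nat" where "strict_mono r" "\<And>n. s (r n) = a"
    using strict_mono_enumerate_Collect by blast
  moreover from this(2) have "incseq (s \<circ> r)" unfolding incseq_def by simp
  ultimately show "\<exists>r. strict_mono r \<and> incseq (s \<circ> r)" by blast
qed

lemma wqo_set_Un:
  assumes "wqo_set A" "wqo_set B"
  shows "wqo_set (A \<union> B)"
  unfolding wqo_set_def
proof (intro allI impI)
  fix s :: "nat \<Rightarrow> 'a" assume s: "range s \<subseteq> A \<union> B"
  have "\<exists>r. strict_mono r \<and> incseq (s \<circ> r)"
    if C: "wqo_set C" and inf: "infinite {n. s n \<in> C}" for C :: "'a set"
  proof -
    obtain q :: "nat \<Rightarrow> nat" where q: "strict_mono q" "\<And>n. s (q n) \<in> C"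
      using strict_mono_enumerate_Collect[OF inf] by blast
    obtain r where "strict_mono r" "incseq ((s \<circ> q) \<circ> r)"
      using wqo_setD[OF C, of "s \<circ> q"] q(2) by auto
    then show ?thesis
      using strict_mono_o[OF q(1)] by (auto simp: comp_assoc)
  qed
  moreover have "infinite {n. s n \<in> A} \<or> infinite {n. s n \<in> B}"
  proof -
    have "{n. s n \<in> A} \<union> {n. s n \<in> B} = UNIV" using s by auto
    then show ?thesis using infinite_UNIV_nat by (metis finite_Un)
  qed
  ultimately show "\<exists>r. strict_mono r \<and> incseq (s \<circ> r)"
    using assms by blast
qed

lemma incseq_comp_strict_mono:
  fixes f :: "nat \<Rightarrow> 'a::order"
  assumes "incseq f" "strict_mono r"
  shows "incseq (f \<circ> r)"
  using monotone_on_o[OF assms(1) strict_mono_mono[OF assms(2)]] by simp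

lemma incseq_prod_iff:
  fixes s :: "nat \<Rightarrow> 'a::order \<times> 'b::order"
  shows "incseq s \<longleftrightarrow> incseq (fst \<circ> s) \<and> incseq (snd \<circ> s)"
  unfolding incseq_def less_eq_prod_def by auto

lemma wqo_set_Times:
  assumes "wqo_set A" "wqo_set B"
  shows "wqo_set (A \<times> B)"
  unfolding wqo_set_def
proof (intro allI impI)
  fix s :: "nat \<Rightarrow> 'a \<times> 'b" assume "range s \<subseteq> A \<times> B"
  then have "s n \<in> A \<times> B" for n by blast
  then have fst_in: "\<And>n. (fst \<circ> s) n \<in> A" and snd_in: "\<And>n. (snd \<circ> s \<circ> q) n \<in> B"
    for q :: "nat \<Rightarrow> nat" by (auto simp: mem_Times_iff)
  obtain q where q: "strict_mono q" "incseq (fst \<circ> s \<circ> q)"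
    using wqo_setD[OF assms(1) fst_in] .
  obtain r where r: "strict_mono r" "incseq (snd \<circ> s \<circ> q \<circ> r)"
    using wqo_setD[OF assms(2) snd_in] .
  have "incseq (fst \<circ> s \<circ> q \<circ> r)"
    using incseq_comp_strict_mono[OF q(2) r(1)] .
  with r(2) have "incseq (s \<circ> (q \<circ> r))"
    by (simp add: incseq_prod_iff comp_assoc)
  then show "\<exists>r. strict_mono r \<and> incseq (s \<circ> r)"
    using strict_mono_o[OF q(1) r(1)] by blast
qed

lemma wqo_set_image:
  assumes "wqo_set A" "mono_on A g"
  shows "wqo_set (g ` A)"
  unfolding wqo_set_def
proof (intro allI impI)
  fix s :: "nat \<Rightarrow> 'b" assume "range s \<subseteq> g ` A"
  then have "\<forall>n. \<exists>a\<in>A. s n = g a" by blast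
  then obtain t where t: "\<And>n. t n \<in> A" "\<And>n. s n = g (t n)" by metis
  obtain r where r: "strict_mono r" "incseq (t \<circ> r)" using wqo_setD[OF assms(1) t(1)] .
  have "incseq (s \<circ> r)"
    unfolding incseq_def
  proof (intro allI impI)
    fix m n :: nat assume "m \<le> n"
    then have "t (r m) \<le> t (r n)" using r(2) unfolding incseq_def by simp
    then show "(s \<circ> r) m \<le> (s \<circ> r) n" using t assms(2) by (simp add: mono_onD)
  qed
  with r(1) show "\<exists>r. strict_mono r \<and> incseq (s \<circ> r)" by blast
qed

lemma decseq_eventually_const:
  fixes t :: "nat \<Rightarrow> 'a::linorder"
  assumes dec: "decseq t" and "range t \<subseteq> A"
    and no_chain: "\<not> (\<exists>u. (\<forall>n. u n \<in> A) \<and> (\<forall>n. u (Suc n) < u n))"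
  shows "\<exists>N. \<forall>n\<ge>N. t n = t N"
proof (rule ccontr)
  assume no_const: "\<nexists>N. \<forall>n\<ge>N. t n = t N"
  have "\<exists>n. t n < t N" for N
  proof -
    obtain n where n: "n \<ge> N" "t n \<noteq> t N" using no_const by blast
    have "t n \<le> t N" using antimonoD[OF dec n(1)] by simp
    with n(2) show ?thesis by (auto simp: order_less_le)
  qed
  then obtain f where f: "\<And>N. t (f N) < t N" by metis
  have "\<exists>u. (\<forall>n. u n \<in> A) \<and> (\<forall>n. u (Suc n) < u n)"
    by (rule exI[of _ "\<lambda>n. t ((f ^^ n) 0)"]) (simp add: f range_subsetD[OF assms(2)])
  with no_chain show False by blast
qed

lemma wqo_set_iff_no_descending_chain:
  fixes A :: "'a::linorder set"
  shows "wqo_set A \<longleftrightarrow> \<not> (\<exists>s. (\<forall>n. s n \<in> A) \<and> (\<forall>n. s (Suc n) < s n))"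
proof
  assume "wqo_set A"
  show "\<not> (\<exists>s. (\<forall>n. s n \<in> A) \<and> (\<forall>n. s (Suc n) < s n))"
  proof
    assume "\<exists>s. (\<forall>n. s n \<in> A) \<and> (\<forall>n. s (Suc n) < s n)"
    then obtain s where s: "\<And>n. s n \<in> A" "\<And>n. s (Suc n) < s n" by blast
    obtain r where r: "strict_mono r" "incseq (s \<circ> r)" using wqo_setD[OF \<open>wqo_set A\<close> s(1)] .
    have "decseq s" by (rule decseq_SucI) (rule less_imp_le[OF s(2)])
    moreover have "Suc (r 0) \<le> r 1" using strict_monoD[OF r(1), of 0 1] by simp
    ultimately have "s (r 1) \<le> s (Suc (r 0))" by (rule antimonoD)
    then have "s (r 1) < s (r 0)" using s(2) by (rule le_less_trans)
    moreover have "s (r 0) \<le> s (r 1)" using incseq_SucD[OF r(2), of 0] by simp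
    ultimately show False by simp
  qed
next
  assume no_chain: "\<not> (\<exists>s. (\<forall>n. s n \<in> A) \<and> (\<forall>n. s (Suc n) < s n))"
  show "wqo_set A"
    unfolding wqo_set_def
  proof (intro allI impI)
    fix s :: "nat \<Rightarrow> 'a" assume s: "range s \<subseteq> A"
    obtain q where q: "strict_mono q" "monoseq (s \<circ> q)"
      using seq_monosub[of s] unfolding comp_def by blast
    show "\<exists>r. strict_mono r \<and> incseq (s \<circ> r)"
    proof (cases "incseq (s \<circ> q)")
      case True
      then show ?thesis using q(1) by blast
    next
      case False
      then have dec: "decseq (s \<circ> q)" using q(2) by (simp add: monoseq_iff)
      have "range (s \<circ> q) \<subseteq> A" using s by auto
      then have "\<exists>N. \<forall>n\<ge>N. (s \<circ> q) n = (s \<circ> q) N"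
        by (rule decseq_eventually_const[OF dec _ no_chain])
      then obtain N where N: "\<And>n. n \<ge> N \<Longrightarrow> s (q n) = s (q N)" by auto
      have "strict_mono (q \<circ> (\<lambda>n. n + N))"
        by (rule strict_mono_o[OF q(1)]) (simp add: strict_mono_def)
      moreover have "incseq (s \<circ> (q \<circ> (\<lambda>n. n + N)))"
        unfolding incseq_def by (simp add: N[of "_ + N"])
      ultimately show ?thesis by blast
    qed
  qed
qed

lemma wqo_set_wellorder: "wqo_set (A :: 'a::wellorder set)"
  unfolding wqo_set_iff_no_descending_chain
proof
  assume "\<exists>s. (\<forall>n. s n \<in> A) \<and> (\<forall>n. s (Suc n) < s n)"
  then obtain s :: "nat \<Rightarrow> 'a" where "\<And>n. s (Suc n) < s n" by blast
  moreover obtain k where "(s (Suc k), s k) \<notin> {(x, y). x < y}"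
    using wf_no_infinite_down_chainE[OF wf] .
  ultimately show False by simp
qed

lemma wqo_set_has_least:
  fixes A :: "'a::linorder set"
  assumes "wqo_set A" "A \<noteq> {}"
  obtains e where "e \<in> A" "\<And>y. y \<in> A \<Longrightarrow> e \<le> y"
proof (rule ccontr)
  assume "\<not> thesis"
  with that have "\<exists>y\<in>A. y < x" if "x \<in> A" for x
    using \<open>x \<in> A\<close> by (meson not_le)
  then obtain f where f: "\<And>x. x \<in> A \<Longrightarrow> f x \<in> A \<and> f x < x" by metis
  obtain a where "a \<in> A" using assms(2) by blast
  then have "(f ^^ n) a \<in> A" for n by (induction n) (simp_all add: f)
  then have "\<exists>s. (\<forall>n. s n \<in> A) \<and> (\<forall>n. s (Suc n) < s n)"
    by (intro exI[of _ "\<lambda>n. (f ^^ n) a"]) (simp add: f)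
  with assms(1) show False by (simp add: wqo_set_iff_no_descending_chain)
qed

lemma wqo_set_sumset:
  fixes A B :: "'a::ordered_ab_semigroup_add set"
  assumes "wqo_set A" "wqo_set B"
  shows "wqo_set {a + b | a b. a \<in> A \<and> b \<in> B}"
proof -
  have "{a + b | a b. a \<in> A \<and> b \<in> B} = (\<lambda>(a, b). a + b) ` (A \<times> B)" by auto
  moreover have "mono_on (A \<times> B) (\<lambda>(a, b). a + b)"
    by (rule mono_onI) (auto simp: less_eq_prod_def intro: add_mono)
  ultimately show ?thesis
    using wqo_set_image[OF wqo_set_Times[OF assms]] by simp
qed

fun nfold_sumset :: "'a::monoid_add set \<Rightarrow> nat \<Rightarrow> 'a set" where
  "nfold_sumset A 0 = {0}"
| "nfold_sumset A (Suc n) = {a + b | a b. a \<in> A \<and> b \<in> nfold_sumset A n}"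

lemma wqo_set_nfold_sumset:
  fixes A :: "'a::{ordered_ab_semigroup_add, monoid_add} set"
  shows "wqo_set A \<Longrightarrow> wqo_set (nfold_sumset A n)"
  by (induction n) (simp_all add: wqo_set_finite wqo_set_sumset)

lemma sum_list_in_nfold_sumset:
  "length xs = n \<Longrightarrow> set xs \<subseteq> A \<Longrightarrow> sum_list xs \<in> nfold_sumset A n"
  by (induction xs arbitrary: n) force+

lemma sum_list_filter_nonzero:
  "sum_list (filter (\<lambda>x. x \<noteq> 0) xs) = sum_list (xs :: 'a::monoid_add list)"
  by (induction xs) auto

lemma length_le_sum_list_div:
  fixes xs :: "real list"
  assumes "e > 0" "\<And>x. x \<in> set xs \<Longrightarrow> e \<le> x"
  shows "real (length xs) \<le> sum_list xs / e"
proof -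
  have "real (length xs) * e \<le> sum_list xs"
    using assms(2) by (induction xs) (auto simp: algebra_simps add_mono)
  with assms(1) show ?thesis by (simp add: field_simps)
qed

lemma plus_setE:
  assumes "j \<in> plus_set I"
  obtains xs where "set xs \<subseteq> I" "j = sum_list xs" "j \<le> 1"
proof (cases "j = 0")
  case True
  then show ?thesis using that[of "[]"] by simp
next
  case False
  then show ?thesis using assms that unfolding plus_set_def by blast
qed

lemma plus_set_subset_nfold_sumset_bound:
  fixes I :: "real set"
  assumes "e > 0" and e_le: "\<And>y. y \<in> I - {0} \<Longrightarrow> e \<le> y"
  shows "plus_set I \<subseteq> nfold_sumset (insert 0 I) (nat \<lceil>1 / e\<rceil>)"
proof
  txt \<open>Drop the zero summands: at most 1/e of them remain. Then pad with zeros to length L.\<close>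
  fix j assume "j \<in> plus_set I"
  define L where "L = nat \<lceil>1 / e\<rceil>"
  obtain xs where xs: "set xs \<subseteq> I" "j = sum_list xs" "j \<le> 1"
    using \<open>j \<in> plus_set I\<close> plus_setE by blast
  define ys where "ys = filter (\<lambda>x. x \<noteq> 0) xs"
  have sum_ys: "sum_list ys = j" unfolding ys_def using xs(2) by (simp add: sum_list_filter_nonzero)
  have ys_I: "set ys \<subseteq> I - {0}" using xs(1) unfolding ys_def by auto
  have "real (length ys) \<le> sum_list ys / e"
    by (rule length_le_sum_list_div[OF \<open>e > 0\<close>]) (use e_le ys_I in blast)
  also have "\<dots> \<le> 1 / e" using xs(3) sum_ys \<open>e > 0\<close> by (simp add: divide_right_mono)
  also have "\<dots> \<le> real L" unfolding L_def by (rule real_nat_ceiling_ge)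
  finally have "length ys \<le> L" by simp
  moreover have "set ys \<subseteq> insert 0 I" using ys_I by blast
  ultimately have "sum_list (ys @ replicate (L - length ys) 0) \<in> nfold_sumset (insert 0 I) L"
    by (intro sum_list_in_nfold_sumset) auto
  then show "j \<in> nfold_sumset (insert 0 I) L" using sum_ys by (simp add: sum_list_replicate)
qed

lemma plus_set_subset_nfold_sumset:
  assumes "I \<subseteq> {0..1}" "wqo_set I"
  obtains L where "plus_set I \<subseteq> nfold_sumset (insert 0 I) L"
proof (cases "I - {0} = {}")
  case True
  have "plus_set I \<subseteq> nfold_sumset (insert 0 I) 0"
  proof
    fix j assume "j \<in> plus_set I"
    then obtain xs where xs: "set xs \<subseteq> I" "j = sum_list xs" using plus_setE by blast
    with True have "filter (\<lambda>x. x \<noteq> 0) xs = []" by (auto simp: filter_empty_conv)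
    then have "j = 0" using xs(2) sum_list_filter_nonzero[of xs] by simp
    then show "j \<in> nfold_sumset (insert 0 I) 0" by simp
  qed
  then show ?thesis by (rule that)
next
  case False
  have "wqo_set (I - {0})" using assms(2) by (rule wqo_set_subset) blast
  then obtain e where e: "e \<in> I - {0}" "\<And>y. y \<in> I - {0} \<Longrightarrow> e \<le> y"
    using False wqo_set_has_least by blast
  have "e \<ge> 0" using e(1) assms(1) by auto
  with e(1) have "e > 0" by auto
  then have "plus_set I \<subseteq> nfold_sumset (insert 0 I) (nat \<lceil>1 / e\<rceil>)"
    using e(2) by (rule plus_set_subset_nfold_sumset_bound)
  then show ?thesis by (rule that)
qed

lemma wqo_set_plus_set:
  assumes "I \<subseteq> {0..1}" "wqo_set I"
  shows "wqo_set (plus_set I)"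
proof -
  obtain L where L: "plus_set I \<subseteq> nfold_sumset (insert 0 I) L"
    using plus_set_subset_nfold_sumset[OF assms] .
  have "wqo_set (insert 0 I)"
    using wqo_set_Un[OF wqo_set_finite[of "{0}"] assms(2)] by simp
  then show ?thesis by (rule wqo_set_subset[OF wqo_set_nfold_sumset L])
qed

lemma hyperstandard_eq: "a \<noteq> 0 \<Longrightarrow> (a - 1 + y) / a = 1 - (1 - y) / (a :: real)"
  by (simp add: field_simps)

lemma hyperstandard_le:
  fixes m m' x x' :: real
  assumes "0 < m" "m \<le> m'" "x \<le> x'" "x \<le> 1"
  shows "(m - 1 + x) / m \<le> (m' - 1 + x') / m'"
proof -
  have "(1 - x') / m' \<le> (1 - x) / m'" using assms by (simp add: divide_right_mono)
  also have "\<dots> \<le> (1 - x) / m" using assms by (simp add: frac_le)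
  finally show ?thesis using assms by (simp add: hyperstandard_eq)
qed

lemma hyperstandard_less:
  fixes m m' x x' :: real
  assumes "0 < m" "m \<le> m'" "x < x'" "x \<le> 1"
  shows "(m - 1 + x) / m < (m' - 1 + x') / m'"
proof -
  have "(1 - x') / m' < (1 - x) / m'" using assms by (simp add: divide_strict_right_mono)
  also have "\<dots> \<le> (1 - x) / m" using assms by (simp add: frac_le)
  finally show ?thesis using assms by (simp add: hyperstandard_eq)
qed

lemma plus_set_le_one: "f \<in> plus_set I \<Longrightarrow> f \<le> 1"
  using plus_setE by blast

lemma wqo_set_D_set:
  assumes "I \<subseteq> {0..1}" "wqo_set I"
  shows "wqo_set (D_set I)"
proof -
  define g where "g = (\<lambda>(f, m :: nat). (real m - 1 + f) / real m)"
  have "D_set I \<subseteq> g ` (plus_set I \<times> {1::nat..})"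
    unfolding D_set_def g_def by force
  moreover have "mono_on (plus_set I \<times> {1::nat..}) g"
    by (rule mono_onI) (auto simp: g_def less_eq_prod_def intro!: hyperstandard_le plus_set_le_one)
  moreover have "wqo_set (plus_set I \<times> {1::nat..})"
    using wqo_set_Times[OF wqo_set_plus_set[OF assms] wqo_set_wellorder[of "{1::nat..}"]] .
  ultimately show ?thesis using wqo_set_image wqo_set_subset by blast
qed

lemma finite_level_set:
  fixes I :: "real set" and j :: real
  assumes "I \<subseteq> {0..1}" "wqo_set I" "j \<le> 1"
  shows "finite {c \<in> I. \<exists>(k::nat) (m::nat) f. k \<ge> 1 \<and> m \<ge> 1 \<and> f \<in> D_set I \<and>
            (real m - 1 + f + real k * c) / real m = j}" (is "finite {c \<in> I. ?P c}")
proof (rule ccontr)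
  assume "infinite {c \<in> I. ?P c}"
  then obtain c :: "nat \<Rightarrow> real" where "inj c" and c_range: "range c \<subseteq> {c \<in> I. ?P c}"
    by (rule infinite_countable_subset[THEN exE]) blast
  have "c n \<in> I \<and> ?P (c n)" for n
    using range_subsetD[OF c_range] by simp
  then obtain k m f where kmf: "\<And>n. c n \<in> I \<and> k n \<ge> (1::nat) \<and> m n \<ge> (1::nat) \<and> f n \<in> D_set I \<and>
      (real (m n) - 1 + f n + real (k n) * c n) / real (m n) = j"
    by metis
  define u where "u n = (c n, f n, k n, m n)" for n
  have "wqo_set (I \<times> D_set I \<times> (UNIV :: nat set) \<times> (UNIV :: nat set))"
    by (intro wqo_set_Times wqo_set_D_set wqo_set_wellorder assms(1,2))
  moreover have "u n \<in> I \<times> D_set I \<times> UNIV \<times> UNIV" for n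
    using kmf by (simp add: u_def)
  ultimately obtain r where r: "strict_mono r" "incseq (u \<circ> r)"
    using wqo_setD by blast
  define a b where "a = r 0" and "b = r 1"
  have "a < b" using strict_monoD[OF r(1), of 0 1] by (simp add: a_def b_def)
  have "u a \<le> u b" using incseq_SucD[OF r(2), of 0] by (simp add: a_def b_def)
  then have le: "c a \<le> c b" "f a \<le> f b" "k a \<le> k b" "m a \<le> m b" by (simp_all add: u_def)
  have "c a \<noteq> c b" using \<open>inj c\<close> \<open>a < b\<close> by (auto dest: injD)
  with le(1) have "c a < c b" by simp
  have "c a \<ge> 0" "1 \<le> k a" "1 \<le> m a" using kmf[of a] assms(1) by auto
  have "real (k a) * c a \<le> real (k b) * c a"
    using le(3) \<open>c a \<ge> 0\<close> by (simp add: mult_right_mono)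
  also have "\<dots> < real (k b) * c b"
    using \<open>c a < c b\<close> le(3) \<open>1 \<le> k a\<close> by simp
  finally have "f a + real (k a) * c a < f b + real (k b) * c b"
    using le(2) by simp
  moreover have "f a + real (k a) * c a \<le> 1"
  proof -
    have "j * real (m a) \<le> 1 * real (m a)" using mult_right_mono[OF assms(3)] by simp
    moreover have "real (m a) - 1 + f a + real (k a) * c a = j * real (m a)"
      using kmf[of a] \<open>1 \<le> m a\<close> by (simp add: field_simps)
    ultimately show ?thesis by linarith
  qed
  ultimately have "(real (m a) - 1 + (f a + real (k a) * c a)) / real (m a)
      < (real (m b) - 1 + (f b + real (k b) * c b)) / real (m b)"
    using le(4) \<open>1 \<le> m a\<close> by (intro hyperstandard_less) auto
  then have "j < j" using kmf[of a] kmf[of b] by (simp add: add.assoc)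
  then show False by simp
qed

theorem lemma5p2:
  fixes I J0 :: "real set"
  assumes "I \<subseteq> {0..1}" and "dcc I"
    and "J0 \<subseteq> {0..1}" and "finite J0"
  shows "finite {c \<in> I. \<exists>(k::nat) (m::nat) f. k \<ge> 1 \<and> m \<ge> 1 \<and> f \<in> D_set I \<and>
            (real m - 1 + f + real k * c) / real m \<in> J0}"
proof -
  have "wqo_set I" using assms(2) unfolding dcc_def wqo_set_iff_no_descending_chain .
  let ?level = "\<lambda>j. {c \<in> I. \<exists>(k::nat) (m::nat) f. k \<ge> 1 \<and> m \<ge> 1 \<and> f \<in> D_set I \<and>
            (real m - 1 + f + real k * c) / real m = j}"
  have "finite (\<Union>j\<in>J0. ?level j)"
    using assms(3,4) finite_level_set[OF assms(1) \<open>wqo_set I\<close>] by auto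
  moreover have "{c \<in> I. \<exists>(k::nat) (m::nat) f. k \<ge> 1 \<and> m \<ge> 1 \<and> f \<in> D_set I \<and>
            (real m - 1 + f + real k * c) / real m \<in> J0} \<subseteq> (\<Union>j\<in>J0. ?level j)"
    by blast
  ultimately show ?thesis by (rule finite_subset[rotated])
qed

end
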